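(* Let $q\ge 7$ and $s\in[1,7]$ be integers, $C$ a finite set with $|C|=2q+s$, and $M\in\mathcal M(6,q,C)$. If $\{i,j,k,l,m,n\}=\{1,\dots,6\}$ and $r(i,j,k)\ge 1$, then $r(l,m,n)\le 9$.
   Context: $\mathcal M(6,q,C)$ is the set of $6\times q$ matrices $M$ with entries from $C$ such that each row has $q$ pairwise distinct entries, each column has $6$ pairwise distinct entries, and every pair of distinct colours of $C$ appears together in some row or some column of $M$. The frequency of a colour is the number of entries of $M$ equal to it. For three distinct rows $a,b,c$, $r(a,b,c)$ is the number of colours of frequency exactly $3$ appearing in each of the rows $a,b,c$. *)

theory Defs
  imports Main
begin

text \<open>A 6 x q matrix is a function M :: nat => nat => 'c; rows are indexed by
  {0..<6} and columns by {0..<q} (row i of the paper is row i-1 here).\<close>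

definition in_row :: "(nat \<Rightarrow> nat \<Rightarrow> 'c) \<Rightarrow> nat \<Rightarrow> nat \<Rightarrow> 'c \<Rightarrow> bool" where
  "in_row M q a x \<longleftrightarrow> (\<exists>b<q. M a b = x)"

definition in_col :: "(nat \<Rightarrow> nat \<Rightarrow> 'c) \<Rightarrow> nat \<Rightarrow> nat \<Rightarrow> 'c \<Rightarrow> bool" where
  "in_col M p b x \<longleftrightarrow> (\<exists>a<p. M a b = x)"

definition matM :: "nat \<Rightarrow> nat \<Rightarrow> 'c set \<Rightarrow> (nat \<Rightarrow> nat \<Rightarrow> 'c) \<Rightarrow> bool" where
  "matM p q C M \<longleftrightarrow>
     (\<forall>a<p. \<forall>b<q. M a b \<in> C) \<and>
     (\<forall>a<p. inj_on (M a) {0..<q}) \<and>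
     (\<forall>b<q. inj_on (\<lambda>a. M a b) {0..<p}) \<and>
     (\<forall>x\<in>C. \<forall>y\<in>C. x \<noteq> y \<longrightarrow>
        (\<exists>a<p. in_row M q a x \<and> in_row M q a y) \<or>
        (\<exists>b<q. in_col M p b x \<and> in_col M p b y))"

definition freq :: "nat \<Rightarrow> nat \<Rightarrow> (nat \<Rightarrow> nat \<Rightarrow> 'c) \<Rightarrow> 'c \<Rightarrow> nat" where
  "freq p q M x = card {(a, b). a < p \<and> b < q \<and> M a b = x}"

definition rcount :: "nat \<Rightarrow> 'c set \<Rightarrow> (nat \<Rightarrow> nat \<Rightarrow> 'c) \<Rightarrow> nat \<Rightarrow> nat \<Rightarrow> nat \<Rightarrow> nat" where
  "rcount q C M a b c = card {x \<in> C. freq 6 q M x = 3 \<and>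
       in_row M q a x \<and> in_row M q b x \<and> in_row M q c x}"

end

theory Submission
  imports Defs
begin

text \<open>Take a colour x of frequency 3 in rows i, j, k. It occurs in no other row, and every
  colour y of frequency 3 in rows l, m, n occurs in no other row either; so x and y share
  no row and, by the covering condition, must share a column. Hence y is one of the at most
  3 * 3 entries of M in rows l, m, n and the (at most three) columns containing x.\<close>

definition occurrences :: "nat \<Rightarrow> nat \<Rightarrow> (nat \<Rightarrow> nat \<Rightarrow> 'c) \<Rightarrow> 'c \<Rightarrow> (nat \<times> nat) set" where
  "occurrences p q M x = {(a, b). a < p \<and> b < q \<and> M a b = x}"

definition row_set :: "nat \<Rightarrow> nat \<Rightarrow> (nat \<Rightarrow> nat \<Rightarrow> 'c) \<Rightarrow> 'c \<Rightarrow> nat set" where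
  "row_set p q M x = {a. a < p \<and> in_row M q a x}"

definition col_set :: "nat \<Rightarrow> nat \<Rightarrow> (nat \<Rightarrow> nat \<Rightarrow> 'c) \<Rightarrow> 'c \<Rightarrow> nat set" where
  "col_set p q M x = {b. b < q \<and> in_col M p b x}"

lemma finite_occurrences: "finite (occurrences p q M x)"
  unfolding occurrences_def
  by (rule finite_subset[of _ "{0..<p} \<times> {0..<q}"]) auto

lemma freq_eq_card_occurrences: "freq p q M x = card (occurrences p q M x)"
  unfolding freq_def occurrences_def ..

lemma row_set_eq_fst_occurrences: "row_set p q M x = fst ` occurrences p q M x"
  unfolding row_set_def occurrences_def in_row_def by force

lemma col_set_eq_snd_occurrences: "col_set p q M x = snd ` occurrences p q M x"
  unfolding col_set_def occurrences_def in_col_def by force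

lemma finite_col_set: "finite (col_set p q M x)"
  by (simp add: col_set_eq_snd_occurrences finite_occurrences)

lemma card_row_set_le_freq: "card (row_set p q M x) \<le> freq p q M x"
  unfolding row_set_eq_fst_occurrences freq_eq_card_occurrences
  by (rule card_image_le[OF finite_occurrences])

lemma card_col_set_le_freq: "card (col_set p q M x) \<le> freq p q M x"
  unfolding col_set_eq_snd_occurrences freq_eq_card_occurrences
  by (rule card_image_le[OF finite_occurrences])

lemma row_set_eq_if_freq_le:
  assumes "finite R" "R \<subseteq> row_set p q M x" "freq p q M x \<le> card R"
  shows "row_set p q M x = R"
proof -
  have "finite (row_set p q M x)"
    by (simp add: row_set_eq_fst_occurrences finite_occurrences)
  moreover have "card (row_set p q M x) \<le> card R"
    using card_row_set_le_freq assms(3) by (rule order.trans)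
  ultimately show ?thesis
    using card_seteq[OF _ assms(2)] by blast
qed

lemma row_set_eq_triple:
  assumes "freq p q M x = 3" "in_row M q a x" "in_row M q b x" "in_row M q c x"
    and "a < p" "b < p" "c < p" "distinct [a, b, c]"
  shows "row_set p q M x = {a, b, c}"
  using assms by (intro row_set_eq_if_freq_le) (auto simp: row_set_def)

lemma mem_entries_rows_times_col_set:
  assumes "matM p q C M" "x \<in> C" "y \<in> C"
    and "row_set p q M x \<noteq> {}" "row_set p q M x \<inter> row_set p q M y = {}"
  shows "y \<in> (\<lambda>(a, b). M a b) ` (row_set p q M y \<times> col_set p q M x)"
proof -
  have "x \<noteq> y" using assms(4,5) by auto
  moreover have "\<not> (\<exists>a<p. in_row M q a x \<and> in_row M q a y)"
    using assms(5) unfolding row_set_def by blast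
  ultimately obtain b where b: "b < q" "in_col M p b x" "in_col M p b y"
    using assms(1-3) unfolding matM_def by blast
  then obtain a where "a < p" "M a b = y"
    unfolding in_col_def by blast
  with b have "a \<in> row_set p q M y" "b \<in> col_set p q M x"
    unfolding row_set_def col_set_def in_row_def by auto
  with \<open>M a b = y\<close> show ?thesis by force
qed

lemma card_colours_with_row_set_le:
  assumes "matM p q C M" "x \<in> C" "row_set p q M x \<noteq> {}"
    and "finite S" "row_set p q M x \<inter> S = {}"
  shows "card {y \<in> C. row_set p q M y = S} \<le> card S * freq p q M x"
proof -
  have "{y \<in> C. row_set p q M y = S} \<subseteq> (\<lambda>(a, b). M a b) ` (S \<times> col_set p q M x)"
    using mem_entries_rows_times_col_set[OF assms(1,2) _ assms(3)] assms(5) by auto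
  then have "card {y \<in> C. row_set p q M y = S} \<le> card (S \<times> col_set p q M x)"
    using assms(4) finite_col_set
    by (meson card_image_le card_mono finite_SigmaI finite_imageI order_trans)
  also have "\<dots> = card S * card (col_set p q M x)"
    by (rule card_cartesian_product)
  also have "\<dots> \<le> card S * freq p q M x"
    by (rule mult_le_mono2[OF card_col_set_le_freq])
  finally show ?thesis .
qed

theorem claim4:
  fixes q s :: nat and C :: "'c set" and M :: "nat \<Rightarrow> nat \<Rightarrow> 'c"
    and i j k l m n :: nat
  assumes "q \<ge> 7" and "1 \<le> s" and "s \<le> 7"
    and "finite C" and "card C = 2 * q + s"
    and "matM 6 q C M"
    and "{i, j, k, l, m, n} = {0..<6}"
    and "rcount q C M i j k \<ge> 1"
  shows "rcount q C M l m n \<le> 9"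
proof -
  have "{x \<in> C. freq 6 q M x = 3 \<and> in_row M q i x \<and> in_row M q j x \<and> in_row M q k x} \<noteq> {}"
    using assms(8) unfolding rcount_def by (metis card.empty not_one_le_zero)
  then obtain x where x: "x \<in> C" "freq 6 q M x = 3"
    "in_row M q i x" "in_row M q j x" "in_row M q k x"
    by blast
  have distinct: "distinct [i, j, k, l, m, n]"
    by (rule card_distinct) (simp add: assms(7))
  have bounds: "i < 6" "j < 6" "k < 6" "l < 6" "m < 6" "n < 6"
    using assms(7) by auto
  have "row_set 6 q M x = {i, j, k}"
    using x distinct bounds by (intro row_set_eq_triple) auto
  then have "card {y \<in> C. row_set 6 q M y = {l, m, n}} \<le> card {l, m, n} * 3"
    using card_colours_with_row_set_le[OF assms(6) x(1), of "{l, m, n}"] x(2) distinct by auto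
  also have "card {l, m, n} = 3"
    using distinct by simp
  finally have bound: "card {y \<in> C. row_set 6 q M y = {l, m, n}} \<le> 9"
    by simp
  have "row_set 6 q M y = {l, m, n}"
    if "freq 6 q M y = 3" "in_row M q l y" "in_row M q m y" "in_row M q n y" for y
    using that distinct bounds by (intro row_set_eq_triple) auto
  then have "rcount q C M l m n \<le> card {y \<in> C. row_set 6 q M y = {l, m, n}}"
    unfolding rcount_def by (intro card_mono) (auto simp: assms(4))
  with bound show ?thesis by simp
qed

end
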